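(* For all integers $N\ge1$ and $\ell\ge1$, the linear map $\partial^\phi_{<N}:\operatorname{gr}^F_\ell(\mathcal B)_N\to\bigoplus_{r\ge1,\ 3\le2r+1\le N}\operatorname{gr}^F_{\ell-1}(\mathcal B)_{N-2r-1}$, $\ w\mapsto\sum_{r}(\phi\otimes\mathrm{id})\big(\partial^{(\ell)}_{2r+1}(w)\big)$, is an isomorphism of $\mathbb Q$-vector spaces.
   Context: $\mathcal X=\{x_0,x_1\}$, $\mathbb Q\langle\mathcal X\rangle$ free noncommutative polynomials graded by weight (number of letters). $\mathcal B$ is the span of all concatenations of $x_0x_1$ and $x_0x_0x_1$; the level of such a word is the number of blocks $x_0x_0x_1$; $F_\ell\mathcal B$ = span of words of level $\le\ell$; $\operatorname{gr}^F_\ell(\mathcal B)_N=(F_\ell\mathcal B)_N/(F_{\ell-1}\mathcal B)_N$, identified with the span of words of weight $N$ and level exactly $\ell$. For letters: $I(x_1;f;x_0)=f$, $I(x_0;f;x_1)=S(f)$ with $S(\varepsilon_1\cdots\varepsilon_m)=(-1)^m\varepsilon_m\cdots\varepsilon_1$, $I(\varepsilon;f;\varepsilon)$ = coefficient of $\mathbf1$ in $f$ times $\mathbf1$. For a word $w=\varepsilon_1\cdots\varepsilon_N$, $\partial_{2r+1}(w)=\sum_{j=0}^{N-2r-1}I(\varepsilon_j;\varepsilon_{j+1}\cdots\varepsilon_{j+2r+1};\varepsilon_{j+2r+2})\otimes\varepsilon_1\cdots\varepsilon_j\varepsilon_{j+2r+2}\cdots\varepsilon_N$ ($\varepsilon_0=x_1,\varepsilon_{N+1}=x_0$).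 For $w$ of level $\ell$, $\partial^{(\ell)}_{2r+1}(w)$ is $\partial_{2r+1}(w)$ with all summands whose right factor has level $\ne\ell-1$ discarded; its left factors lie in $\mathcal B^1=\operatorname{span}\{(x_0x_1)^ax_0x_0x_1(x_0x_1)^b,\ (x_0x_1)^nx_0: a,b,n\ge0\}$. $\phi:\mathcal B^1\to\mathbb Q$ is linear with $\phi((x_0x_1)^ax_0x_0x_1(x_0x_1)^b)=c^{a+b+1}_{a,b}$ and $\phi((x_0x_1)^nx_0)=2(-1)^n$, where $c^r_{a,b}=2(-1)^r\big(\binom{2r}{2b+2}-(1-2^{-2r})\binom{2r}{2a+1}\big)$; $\phi\otimes\mathrm{id}$ is followed by the identification $\mathbb Q\otimes V=V$. *)

theory Defs
  imports Complex_Main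
begin

text \<open>Letters x0, x1; words are lists of letters (weight = length).
  Noncommutative polynomials over Q are represented as finitely supported
  functions word => rat; tensors Q<X> (x) Q<X> as functions on pairs of words.\<close>

datatype letter = X0 | X1

type_synonym word = "letter list"
type_synonym poly = "word \<Rightarrow> rat"
type_synonym tens = "word \<times> word \<Rightarrow> rat"

definition blk :: "bool \<Rightarrow> word" where
  "blk b = (if b then [X0, X0, X1] else [X0, X1])"

definition has_level :: "nat \<Rightarrow> word \<Rightarrow> bool" where
  "has_level l w \<longleftrightarrow> (\<exists>bs. w = concat (map blk bs) \<and> count_list bs True = l)"

text \<open>Basis of gr^F_l(B)_N: words of weight N and level exactly l.\<close>
definition grB :: "nat \<Rightarrow> nat \<Rightarrow> word set" where
  "grB N l = {w. length w = N \<and> has_level l w}"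

definition monom :: "rat \<Rightarrow> word \<Rightarrow> poly" where
  "monom c u = (\<lambda>v. if v = u then c else 0)"

definition antipode :: "word \<Rightarrow> poly" where
  "antipode u = monom ((-1) ^ length u) (rev u)"

definition Ifun :: "letter \<Rightarrow> word \<Rightarrow> letter \<Rightarrow> poly" where
  "Ifun a f b =
     (if a = X1 \<and> b = X0 then monom 1 f
      else if a = X0 \<and> b = X1 then antipode f
      else monom (if f = [] then 1 else 0) [])"

definition eps :: "word \<Rightarrow> nat \<Rightarrow> letter" where
  "eps w k = (if k = 0 then X1 else if k \<le> length w then w ! (k - 1) else X0)"

definition tensor :: "poly \<Rightarrow> poly \<Rightarrow> tens" where
  "tensor p q = (\<lambda>(u, v). p u * q v)"

definition partial :: "nat \<Rightarrow> word \<Rightarrow> tens" where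
  "partial r w = (\<lambda>x. \<Sum>j | j + 2 * r + 1 \<le> length w.
      tensor (Ifun (eps w j) (take (2 * r + 1) (drop j w)) (eps w (j + 2 * r + 2)))
             (monom 1 (take j w @ drop (j + 2 * r + 1) w)) x)"

definition partial_l :: "nat \<Rightarrow> nat \<Rightarrow> word \<Rightarrow> tens" where
  "partial_l l r w = (\<lambda>(u, v). if has_level (l - 1) v then partial r w (u, v) else 0)"

definition pw :: "nat \<Rightarrow> word" where
  "pw n = concat (replicate n [X0, X1])"

definition cc :: "nat \<Rightarrow> nat \<Rightarrow> nat \<Rightarrow> rat" where
  "cc r a b = 2 * (-1) ^ r * (of_nat ((2 * r) choose (2 * b + 2))
              - (1 - 1 / 2 ^ (2 * r)) * of_nat ((2 * r) choose (2 * a + 1)))"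

text \<open>phi on the basis words of B^1 (extended by 0 on other words).\<close>
definition phi_word :: "word \<Rightarrow> rat" where
  "phi_word u =
     (if \<exists>a b. u = pw a @ [X0, X0, X1] @ pw b then
        (case (THE (a, b). u = pw a @ [X0, X0, X1] @ pw b) of (a, b) \<Rightarrow> cc (a + b + 1) a b)
      else if \<exists>n. u = pw n @ [X0] then
        2 * (-1) ^ (THE n. u = pw n @ [X0])
      else 0)"

text \<open>(phi (x) id) followed by Q (x) V = V.\<close>
definition phi_tensor :: "tens \<Rightarrow> poly" where
  "phi_tensor T = (\<lambda>v. \<Sum>u | T (u, v) \<noteq> 0. phi_word u * T (u, v))"

text \<open>Image of a basis word in the direct sum over r (encoded as functions on
  pairs (r, v)); components outside 3 <= 2r+1 <= N are zero.\<close>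
definition dphi :: "nat \<Rightarrow> nat \<Rightarrow> word \<Rightarrow> nat \<times> word \<Rightarrow> rat" where
  "dphi N l w = (\<lambda>(r, v). if 1 \<le> r \<and> 2 * r + 1 \<le> N then phi_tensor (partial_l l r w) v else 0)"

definition Phi :: "nat \<Rightarrow> nat \<Rightarrow> poly \<Rightarrow> nat \<times> word \<Rightarrow> rat" where
  "Phi N l f = (\<lambda>x. \<Sum>w\<in>grB N l. f w * dphi N l w x)"

definition GrDom :: "nat \<Rightarrow> nat \<Rightarrow> poly set" where
  "GrDom N l = {f. \<forall>w. f w \<noteq> 0 \<longrightarrow> w \<in> grB N l}"

definition GrCod :: "nat \<Rightarrow> nat \<Rightarrow> (nat \<times> word \<Rightarrow> rat) set" where
  "GrCod N l = {g. \<forall>r v. g (r, v) \<noteq> 0 \<longrightarrow>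
       1 \<le> r \<and> 2 * r + 1 \<le> N \<and> v \<in> grB (N - (2 * r + 1)) (l - 1)}"

end

theory Submission
  imports Defs "HOL-Library.Function_Algebras" "HOL-Computational_Algebra.Euclidean_Algorithm"
begin

text \<open>Rescale the component of index \<open>2r + 1\<close> of the target by \<open>2\<^sup>2\<^sup>r/(4r)\<close>. Then the matrix of
  \<open>\<partial>\<^sup>\<phi>\<^sub><\<^sub>N\<close> in the word bases has entries in \<open>\<int>\<^sub>(\<^sub>2\<^sub>)\<close>. Match the basis word
  \<open>(x\<^sub>0x\<^sub>1)\<^sup>Mx\<^sub>0x\<^sub>0x\<^sub>1v\<close> of level \<open>\<ell>\<close> with the basis element \<open>v\<close> of the component
  \<open>r = M + 1\<close>; this is a bijection between the two bases, and modulo 2 the matrix becomes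
  unitriangular when the words are ordered by \<open>M\<close>. The diagonal entry comes from cutting out
  the leading \<open>(x\<^sub>0x\<^sub>1)\<^sup>Mx\<^sub>0x\<^sub>0x\<^sub>1\<close> and is odd, a word with larger \<open>M\<close> has no such cut
  at the front, and the remaining cuts with an odd coefficient come in pairs (a cut between
  \<open>x\<^sub>1 \<dots> x\<^sub>0\<close> at position \<open>j\<close> and the cut at \<open>j - 1\<close> with reversed middle) whose
  contributions agree modulo 2. So the determinant is a 2-adic unit, in particular nonzero.\<close>

section \<open>Words of \<open>\<B>\<close>\<close>

lemma pw_0 [simp]: "pw 0 = []"
  by (simp add: pw_def)

lemma pw_Suc [simp]: "pw (Suc n) = X0 # X1 # pw n"
  by (simp add: pw_def)

lemma length_pw [simp]: "length (pw n) = 2 * n"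
  by (induction n) auto

lemma pw_inj: "pw a = pw b \<Longrightarrow> a = b"
  by (metis length_pw mult_left_cancel zero_neq_numeral)

lemma pw_X0X0X1_cancel:
  "pw a @ X0 # X0 # X1 # x = pw a' @ X0 # X0 # X1 # y \<Longrightarrow> a = a' \<and> x = y"
proof (induction a arbitrary: a')
  case 0
  then show ?case by (cases a') auto
next
  case (Suc a)
  then show ?case by (cases a') auto
qed

lemma pw_X0X0X1_neq_pw_X0: "pw a @ X0 # X0 # X1 # x \<noteq> pw n @ [X0]"
proof (induction a arbitrary: n)
  case 0
  then show ?case by (cases n) auto
next
  case (Suc a)
  then show ?case by (cases n) auto
qed

lemma pw_snoc: "pw n @ [X0, X1] = X0 # X1 # pw n"
  by (induction n) auto

lemma X1_Cons_pw: "X1 # pw n = rev (pw n) @ [X1]"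
proof (induction n)
  case (Suc n)
  have "X1 # X0 # rev (pw n) = rev (pw n) @ [X1, X0]"
    using arg_cong[OF pw_snoc[of n], of rev] by simp
  with Suc show ?case by simp
qed simp

lemma X1_Cons_pw_X0X0X1_pw:
  "X1 # pw a @ X0 # X0 # X1 # pw b = rev (pw b @ X0 # X0 # X1 # pw a) @ [X1]"
proof -
  have "X1 # pw a @ X0 # X0 # X1 # pw b = (X1 # pw a) @ X0 # X0 # (X1 # pw b)"
    by simp
  also have "\<dots> = rev (pw b @ X0 # X0 # X1 # pw a) @ [X1]"
    by (simp add: X1_Cons_pw)
  finally show ?thesis .
qed

lemma phi_word_pw_X0X0X1_pw: "phi_word (pw a @ X0 # X0 # X1 # pw b) = cc (a + b + 1) a b"
proof -
  have "(THE (a', b'). pw a @ X0 # X0 # X1 # pw b = pw a' @ X0 # X0 # X1 # pw b') = (a, b)"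
    by (rule the_equality) (auto dest!: pw_X0X0X1_cancel pw_inj)
  then show ?thesis
    unfolding phi_word_def by auto
qed

lemma phi_word_pw_X0: "phi_word (pw n @ [X0]) = 2 * (-1) ^ n"
proof -
  have "\<not> (\<exists>a b. pw n @ [X0] = pw a @ X0 # X0 # X1 # pw b)"
    using pw_X0X0X1_neq_pw_X0 by metis
  moreover have "(THE n'. pw n @ [X0] = pw n' @ [X0]) = n"
    by (rule the_equality) (auto dest: pw_inj)
  ultimately show ?thesis
    unfolding phi_word_def by auto
qed

lemma phi_word_eq_0:
  "\<nexists>a b. u = pw a @ X0 # X0 # X1 # pw b \<Longrightarrow> \<nexists>n. u = pw n @ [X0] \<Longrightarrow> phi_word u = 0"
  unfolding phi_word_def by auto

lemma blk_simps [simp]: "blk True = [X0, X0, X1]" "blk False = [X0, X1]"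
  by (simp_all add: blk_def)

lemma concat_blk_replicate_False: "concat (map blk (replicate k False)) = pw k"
  by (induction k) auto

lemma has_level_pos_iff:
  assumes "l \<ge> 1"
  shows "has_level l w \<longleftrightarrow> (\<exists>M v. w = pw M @ X0 # X0 # X1 # v \<and> has_level (l - 1) v)"
proof
  assume "has_level l w"
  then obtain bs where bs: "w = concat (map blk bs)" "count_list bs True = l"
    unfolding has_level_def by blast
  with assms have "True \<in> set bs"
    by (metis count_list_0_iff not_one_le_zero)
  then obtain ys zs where yz: "bs = ys @ True # zs" "True \<notin> set ys"
    by (metis split_list_first)
  then have ys: "ys = replicate (length ys) False"
    by (metis (full_types) replicate_length_same)
  have "w = pw (length ys) @ X0 # X0 # X1 # concat (map blk zs)"
    using bs(1) yz(1) ys by (metis concat_blk_replicate_False blk_simps(1) concat_append map_append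
        concat.simps(2) list.map(2) append_Cons append_Nil)
  moreover have "count_list zs True = l - 1"
    using bs(2) yz by (simp add: count_list_0_iff)
  ultimately show "\<exists>M v. w = pw M @ X0 # X0 # X1 # v \<and> has_level (l - 1) v"
    unfolding has_level_def by blast
next
  assume "\<exists>M v. w = pw M @ X0 # X0 # X1 # v \<and> has_level (l - 1) v"
  then obtain M bs where "w = pw M @ X0 # X0 # X1 # concat (map blk bs)"
    and "count_list bs True = l - 1"
    unfolding has_level_def by blast
  then have "w = concat (map blk (replicate M False @ True # bs))"
    and "count_list (replicate M False @ True # bs) True = l"
    using assms by (simp_all add: pw_def)
  then show "has_level l w"
    unfolding has_level_def by blast
qed

fun lead_pairs :: "word \<Rightarrow> nat" where
  "lead_pairs (X0 # X1 # w) = Suc (lead_pairs w)"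
| "lead_pairs _ = 0"

lemma lead_pairs_pw_X0X0X1 [simp]: "lead_pairs (pw a @ X0 # X0 # X1 # x) = a"
  by (induction a) auto

definition isolated_X1 :: "word \<Rightarrow> bool" where
  "isolated_X1 w \<longleftrightarrow> (w \<noteq> [] \<longrightarrow> w ! 0 = X0) \<and>
     (\<forall>i. Suc i < length w \<longrightarrow> w ! i = X1 \<longrightarrow> w ! Suc i = X0)"

lemma isolated_X1_first: "isolated_X1 w \<Longrightarrow> w \<noteq> [] \<Longrightarrow> w ! 0 = X0"
  unfolding isolated_X1_def by blast

lemma isolated_X1_next: "isolated_X1 w \<Longrightarrow> Suc i < length w \<Longrightarrow> w ! i = X1 \<Longrightarrow> w ! Suc i = X0"
  unfolding isolated_X1_def by blast

lemma isolated_X1_Cons_X0: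
  assumes "isolated_X1 w"
  shows "isolated_X1 (X0 # w)"
  unfolding isolated_X1_def
proof (intro conjI allI impI)
  fix i
  assume "Suc i < length (X0 # w)" "(X0 # w) ! i = X1"
  with assms show "(X0 # w) ! Suc i = X0"
    by (cases i) (auto intro: isolated_X1_next)
qed simp

lemma isolated_X1_X0_X1:
  assumes "isolated_X1 w"
  shows "isolated_X1 (X0 # X1 # w)"
  unfolding isolated_X1_def
proof (intro conjI allI impI)
  fix i
  assume "Suc i < length (X0 # X1 # w)" "(X0 # X1 # w) ! i = X1"
  with assms show "(X0 # X1 # w) ! Suc i = X0"
  proof (cases i)
    case (Suc k)
    with assms \<open>Suc i < length (X0 # X1 # w)\<close> \<open>(X0 # X1 # w) ! i = X1\<close> show ?thesis
      by (cases k) (auto intro: isolated_X1_next isolated_X1_first)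
  qed simp
qed simp

lemma has_level_isolated_X1: "has_level l w \<Longrightarrow> isolated_X1 w"
proof -
  have "isolated_X1 (concat (map blk bs))" for bs
  proof (induction bs)
    case (Cons b bs)
    then show ?case
      by (cases b) (auto intro: isolated_X1_Cons_X0 isolated_X1_X0_X1)
  qed (simp add: isolated_X1_def)
  then show "has_level l w \<Longrightarrow> isolated_X1 w"
    unfolding has_level_def by blast
qed

section \<open>The local ring \<open>\<int>\<^sub>(\<^sub>2\<^sub>)\<close>\<close>

lemma int_eq_pow2_times_odd:
  assumes "n \<noteq> (0::int)"
  obtains i a where "odd a" "n = 2 ^ i * a"
proof -
  have "\<not> is_unit (2::int)"
    by simp
  then show thesis
    using multiplicity_decompose'[OF assms] that by blast
qed

definition in_Z2 :: "rat \<Rightarrow> bool" where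
  "in_Z2 q \<longleftrightarrow> (\<exists>a b::int. odd b \<and> q = of_int a / of_int b)"

definition in_2Z2 :: "rat \<Rightarrow> bool" where
  "in_2Z2 q \<longleftrightarrow> in_Z2 (q / 2)"

lemma in_Z2_odd_frac: "odd b \<Longrightarrow> in_Z2 (of_int a / of_int b)"
  unfolding in_Z2_def by blast

lemma in_Z2_of_int [simp]: "in_Z2 (of_int a)"
  using in_Z2_odd_frac[of 1 a] by simp

lemma in_Z2_of_nat [simp]: "in_Z2 (of_nat n)"
  using in_Z2_of_int[of "int n"] by simp

lemma in_Z2_0 [simp]: "in_Z2 0"
  using in_Z2_of_int[of 0] by simp

lemma in_Z2_1 [simp]: "in_Z2 1"
  using in_Z2_of_int[of 1] by simp

lemma in_Z2_numeral [simp]: "in_Z2 (numeral k)"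
  using in_Z2_of_nat[of "numeral k"] by simp

lemma in_Z2_pow2 [simp]: "in_Z2 (2 ^ n)"
  using in_Z2_of_nat[of "2 ^ n"] by simp

lemma in_Z2_div_odd: "odd n \<Longrightarrow> in_Z2 (of_nat m / of_nat n)"
  using in_Z2_odd_frac[of "int n" "int m"] by simp

lemma in_Z2_add:
  assumes "in_Z2 x" "in_Z2 y"
  shows "in_Z2 (x + y)"
proof -
  from assms obtain a b c d :: int
    where "odd b" "x = of_int a / of_int b" "odd d" "y = of_int c / of_int d"
    unfolding in_Z2_def by blast
  moreover have "(of_int b :: rat) \<noteq> 0" "(of_int d :: rat) \<noteq> 0"
    using \<open>odd b\<close> \<open>odd d\<close> by auto
  ultimately have "x + y = of_int (a * d + c * b) / of_int (b * d)" and "odd (b * d)"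
    by (simp_all add: add_frac_eq)
  then show ?thesis
    by (metis in_Z2_odd_frac)
qed

lemma in_Z2_mult:
  assumes "in_Z2 x" "in_Z2 y"
  shows "in_Z2 (x * y)"
proof -
  from assms obtain a b c d :: int
    where "odd b" "x = of_int a / of_int b" "odd d" "y = of_int c / of_int d"
    unfolding in_Z2_def by blast
  then have "x * y = of_int (a * c) / of_int (b * d)" and "odd (b * d)"
    by simp_all
  then show ?thesis
    by (metis in_Z2_odd_frac)
qed

lemma in_Z2_minus: "in_Z2 x \<Longrightarrow> in_Z2 (- x)"
  unfolding in_Z2_def by (metis minus_divide_left of_int_minus)

lemma in_Z2_diff: "in_Z2 x \<Longrightarrow> in_Z2 y \<Longrightarrow> in_Z2 (x - y)"
  using in_Z2_add in_Z2_minus by fastforce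

lemma in_Z2_sum: "(\<And>x. x \<in> A \<Longrightarrow> in_Z2 (f x)) \<Longrightarrow> in_Z2 (sum f A)"
  by (induction A rule: infinite_finite_induct) (auto intro: in_Z2_add)

lemma in_Z2_sign: "in_Z2 x \<Longrightarrow> in_Z2 ((-1) ^ n * x)"
  by (cases "even n") (simp_all add: in_Z2_minus)

lemma in_2Z2_imp_in_Z2: "in_2Z2 x \<Longrightarrow> in_Z2 x"
  unfolding in_2Z2_def using in_Z2_mult[of 2 "x / 2"] by simp

lemma in_2Z2_0 [simp]: "in_2Z2 0"
  by (simp add: in_2Z2_def)

lemma in_2Z2_add: "in_2Z2 x \<Longrightarrow> in_2Z2 y \<Longrightarrow> in_2Z2 (x + y)"
  unfolding in_2Z2_def by (simp add: add_divide_distrib in_Z2_add)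

lemma in_2Z2_minus_iff [simp]: "in_2Z2 (- x) \<longleftrightarrow> in_2Z2 x"
  unfolding in_2Z2_def using in_Z2_minus by fastforce

lemma in_2Z2_diff: "in_2Z2 x \<Longrightarrow> in_2Z2 y \<Longrightarrow> in_2Z2 (x - y)"
  using in_2Z2_add[of x "- y"] by simp

lemma in_2Z2_sum: "(\<And>x. x \<in> A \<Longrightarrow> in_2Z2 (f x)) \<Longrightarrow> in_2Z2 (sum f A)"
  by (induction A rule: infinite_finite_induct) (auto intro: in_2Z2_add)

lemma in_2Z2_mult_right: "in_2Z2 x \<Longrightarrow> in_Z2 y \<Longrightarrow> in_2Z2 (x * y)"
  unfolding in_2Z2_def using in_Z2_mult[of "x / 2" y] by simp

lemma in_2Z2_mult_left: "in_Z2 x \<Longrightarrow> in_2Z2 y \<Longrightarrow> in_2Z2 (x * y)"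
  using in_2Z2_mult_right[of y x] by (simp add: mult.commute)

lemma in_2Z2_sign_iff: "in_2Z2 ((-1) ^ n * x) \<longleftrightarrow> in_2Z2 x"
  by (cases "even n") auto

lemma in_Z2_unit_iff:
  "in_Z2 x \<and> \<not> in_2Z2 x \<longleftrightarrow> (\<exists>a b. odd a \<and> odd b \<and> x = of_int a / of_int b)"
proof
  assume x: "in_Z2 x \<and> \<not> in_2Z2 x"
  then obtain a b where ab: "odd b" "x = of_int a / of_int b"
    unfolding in_Z2_def by blast
  have "odd a"
  proof
    assume "even a"
    then obtain c where "a = 2 * c" by blast
    with ab have "x / 2 = of_int c / of_int b"
      by simp
    with ab x show False
      unfolding in_2Z2_def by (metis in_Z2_odd_frac)
  qed
  with ab show "\<exists>a b. odd a \<and> odd b \<and> x = of_int a / of_int b"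
    by blast
next
  assume "\<exists>a b. odd a \<and> odd b \<and> x = of_int a / of_int b"
  then obtain a b where ab: "odd a" "odd b" "x = of_int a / of_int b"
    by blast
  have "\<not> in_2Z2 x"
  proof
    assume "in_2Z2 x"
    then obtain c d where cd: "odd d" "x / 2 = of_int c / of_int d"
      unfolding in_2Z2_def in_Z2_def by blast
    moreover have "(of_int b :: rat) \<noteq> 0" "(of_int d :: rat) \<noteq> 0"
      using ab cd by auto
    ultimately have "(of_int (a * d) :: rat) = of_int (2 * b * c)"
      using ab by (simp add: field_simps)
    then have "a * d = 2 * b * c"
      by (simp only: of_int_eq_iff)
    with ab cd show False
      by (metis even_mult_iff dvd_triv_left)
  qed
  with ab show "in_Z2 x \<and> \<not> in_2Z2 x"
    by (simp add: in_Z2_odd_frac)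
qed

lemma not_in_2Z2_of_int: "odd a \<Longrightarrow> \<not> in_2Z2 (of_int a)"
  using in_Z2_unit_iff[of "of_int a"] by (metis div_by_1 odd_one of_int_1)

lemma not_in_2Z2_mult:
  assumes "in_Z2 x" "\<not> in_2Z2 x" "in_Z2 y" "\<not> in_2Z2 y"
  shows "\<not> in_2Z2 (x * y)"
proof -
  from assms obtain a b c d where "odd a" "odd b" "x = of_int a / of_int b"
    and "odd c" "odd d" "y = of_int c / of_int d"
    using in_Z2_unit_iff by meson
  then have "x * y = of_int (a * c) / of_int (b * d)" and "odd (a * c)" "odd (b * d)"
    by simp_all
  then show ?thesis
    using in_Z2_unit_iff by blast
qed

lemma not_in_2Z2_add: "\<not> in_2Z2 x \<Longrightarrow> in_2Z2 y \<Longrightarrow> \<not> in_2Z2 (x + y)"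
  using in_2Z2_diff by fastforce

lemma exists_pow2_mult_unit:
  assumes "q \<noteq> 0"
  obtains e :: int where "in_Z2 (2 powi e * q)" "\<not> in_2Z2 (2 powi e * q)"
proof -
  obtain n d where nd: "quotient_of q = (n, d)"
    by fastforce
  then have q: "q = of_int n / of_int d" and "d \<noteq> 0"
    using quotient_of_div quotient_of_denom_pos by fastforce+
  with assms have "n \<noteq> 0"
    by auto
  obtain i a where a: "odd a" "n = 2 ^ i * a"
    using int_eq_pow2_times_odd[OF \<open>n \<noteq> 0\<close>] .
  obtain j b where b: "odd b" "d = 2 ^ j * b"
    using int_eq_pow2_times_odd[OF \<open>d \<noteq> 0\<close>] .
  have "2 powi (int j - int i) * q = of_int a / of_int b"
    using \<open>d \<noteq> 0\<close> by (simp add: q a b power_int_diff field_simps)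
  with a b show ?thesis
    using that in_Z2_unit_iff by metis
qed

lemma exists_scaling_to_unit:
  assumes "finite S" "w0 \<in> S" "f w0 \<noteq> 0"
  obtains c where "\<And>w. w \<in> S \<Longrightarrow> in_Z2 (c * f w)" "\<exists>w\<in>S. \<not> in_2Z2 (c * f w)"
proof -
  define S' where "S' = {w \<in> S. f w \<noteq> 0}"
  have "\<forall>w\<in>S'. \<exists>e::int. in_Z2 (2 powi e * f w) \<and> \<not> in_2Z2 (2 powi e * f w)"
    unfolding S'_def by (metis (mono_tags) exists_pow2_mult_unit mem_Collect_eq)
  then obtain e where e: "\<And>w. w \<in> S' \<Longrightarrow> in_Z2 (2 powi e w * f w) \<and> \<not> in_2Z2 (2 powi e w * f w)"
    by metis
  have "finite S'" "S' \<noteq> {}"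
    using assms unfolding S'_def by auto
  then have "Max (e ` S') \<in> e ` S'"
    by simp
  then obtain wm where wm: "wm \<in> S'" "Max (e ` S') = e wm"
    by blast
  have le_wm: "e w \<le> e wm" if "w \<in> S'" for w
    using wm(2) \<open>finite S'\<close> that by (metis Max_ge finite_imageI image_eqI)
  have "in_Z2 (2 powi e wm * f w)" if "w \<in> S" for w
  proof (cases "w \<in> S'")
    case True
    have "(2::rat) powi e wm = 2 powi (e wm - e w) * 2 powi e w"
      by (simp flip: power_int_add)
    also have "(2::rat) powi (e wm - e w) = of_nat (2 ^ nat (e wm - e w))"
      using le_wm[OF True] by (simp add: power_int_def)
    finally have "2 powi e wm * f w = of_nat (2 ^ nat (e wm - e w)) * (2 powi e w * f w)"
      by simp
    with e[OF True] show ?thesis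
      by (metis in_Z2_mult in_Z2_of_nat)
  next
    case False
    with that show ?thesis
      unfolding S'_def by simp
  qed
  moreover have "wm \<in> S"
    using wm(1) unfolding S'_def by simp
  ultimately show ?thesis
    using that[of "2 powi e wm"] e[OF wm(1)] by blast
qed

section \<open>The values of \<open>\<phi>\<close> after rescaling\<close>

text \<open>Rescaling the component of index \<open>2r + 1\<close> by \<open>2\<^sup>2\<^sup>r/(4r)\<close> makes all values of \<open>\<phi>\<close> on
  words of weight \<open>2r + 1\<close> 2-integral; modulo 2 only the words \<open>(x\<^sub>0x\<^sub>1)\<^sup>ax\<^sub>0x\<^sub>0x\<^sub>1(x\<^sub>0x\<^sub>1)\<^sup>b\<close>
  survive, with the value \<open>binom(2r - 1, 2a)/(2a + 1)\<close>, which is symmetric in \<open>a\<close> and \<open>b\<close>.\<close>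

definition phi_scale :: "nat \<Rightarrow> rat" where
  "phi_scale r = 2 ^ (2 * r) / (4 * of_nat r)"

lemma in_2Z2_pow2_div:
  assumes "r \<ge> 1"
  shows "in_2Z2 (2 ^ (2 * r - 1) / of_nat r)"
proof -
  have "int r \<noteq> 0"
    using assms by simp
  then obtain k a where a: "odd a" "int r = 2 ^ k * a"
    by (rule int_eq_pow2_times_odd)
  with assms have "0 < (2::int) ^ k * a"
    by linarith
  then have "a > 0"
    by (simp add: zero_less_mult_iff)
  then have "(2::int) ^ k \<le> 2 ^ k * a"
    by simp
  then have "2 ^ k \<le> r"
    using a(2) by (metis of_nat_le_iff of_nat_numeral of_nat_power)
  also have "r < 2 ^ r"
    by (rule less_exp)
  finally have "k < r"
    by (simp add: power_strict_increasing_iff)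
  have r: "(of_nat r :: rat) = 2 ^ k * of_int a"
    using arg_cong[OF a(2), of "of_int :: int \<Rightarrow> rat"] by simp
  have e: "2 * r - 1 = Suc (k + (2 * r - 2 - k))"
    using \<open>k < r\<close> by simp
  have "2 ^ (2 * r - 1) / of_nat r / 2 = (of_int (2 ^ (2 * r - 2 - k)) / of_int a :: rat)"
    using \<open>a > 0\<close> unfolding r e power_Suc power_add by (simp add: field_simps)
  then show ?thesis
    unfolding in_2Z2_def by (metis in_Z2_odd_frac \<open>odd a\<close>)
qed

lemma phi_scale_cc:
  assumes "r = a + b + 1"
  shows "phi_scale r * cc r a b =
    (-1) ^ r * (2 ^ (2 * r - 1) / of_nat r * of_nat ((2 * r) choose (2 * b + 2))
      - (2 ^ (2 * r) - 1) * (of_nat ((2 * r - 1) choose (2 * a)) / of_nat (2 * a + 1)))"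
proof -
  define K where "K = (of_nat ((2 * r - 1) choose (2 * a)) / of_nat (2 * a + 1) :: rat)"
  define Q where "Q = (2 ^ (2 * r - 1) :: rat)"
  have nz: "(of_nat r :: rat) \<noteq> 0" "Q \<noteq> 0"
    using assms unfolding Q_def by simp_all
  have "(2 * a + 1) * ((2 * r) choose (2 * a + 1)) = 2 * r * ((2 * r - 1) choose (2 * a))"
    using binomial_absorption[of "2 * a" "2 * r"] by simp
  then have "(of_nat (2 * a + 1) :: rat) * of_nat ((2 * r) choose (2 * a + 1))
      = 2 * of_nat r * of_nat ((2 * r - 1) choose (2 * a))"
    by (metis of_nat_mult of_nat_numeral)
  then have binom: "(of_nat ((2 * r) choose (2 * a + 1)) :: rat) = 2 * of_nat r * K"
    unfolding K_def by (simp add: field_simps del: of_nat_add)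
  have pow: "(2::rat) ^ (2 * r) = 2 * Q"
    unfolding Q_def using assms by (simp flip: power_Suc)
  show ?thesis
    unfolding phi_scale_def cc_def binom pow K_def[symmetric] Q_def[symmetric]
    using nz by (simp add: field_simps)
qed

lemma odd_binomial_ratio_symmetric:
  assumes "n = 2 * a + 2 * b + 1"
  shows "(of_nat (n choose (2 * a)) / of_nat (2 * a + 1) :: rat)
    = of_nat (n choose (2 * b)) / of_nat (2 * b + 1)"
proof -
  have "(2 * a + 1) * (n choose (2 * b)) = n * ((n - 1) choose (2 * a))"
    using binomial_absorption[of "2 * a" n] binomial_symmetric[of "2 * b" n] assms
    by (simp add: algebra_simps)
  moreover have "(2 * b + 1) * (n choose (2 * a)) = n * ((n - 1) choose (2 * a))"
    using binomial_absorb_comp[of n "2 * a"] assms by simp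
  ultimately have "(n choose (2 * a)) * (2 * b + 1) = (n choose (2 * b)) * (2 * a + 1)"
    by (simp add: mult.commute)
  then have "(of_nat (n choose (2 * a)) :: rat) * of_nat (2 * b + 1)
      = of_nat (n choose (2 * b)) * of_nat (2 * a + 1)"
    by (simp only: of_nat_mult [symmetric])
  moreover have "(of_nat (2 * a + 1) :: rat) \<noteq> 0" and "(of_nat (2 * b + 1) :: rat) \<noteq> 0"
    by (simp_all del: of_nat_add)
  ultimately show ?thesis
    using frac_eq_eq by blast
qed

lemma in_Z2_phi_scale_cc:
  assumes "r = a + b + 1"
  shows "in_Z2 (phi_scale r * cc r a b)"
proof -
  have "r \<ge> 1"
    using assms by simp
  then have "in_Z2 (2 ^ (2 * r - 1) / of_nat r * of_nat ((2 * r) choose (2 * b + 2)))"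
    by (rule in_2Z2_imp_in_Z2[OF in_2Z2_mult_right[OF in_2Z2_pow2_div in_Z2_of_nat]])
  moreover have "in_Z2 ((2 ^ (2 * r) - 1) * (of_nat ((2 * r - 1) choose (2 * a)) / of_nat (2 * a + 1)))"
    by (rule in_Z2_mult[OF in_Z2_diff[OF in_Z2_pow2 in_Z2_1] in_Z2_div_odd]) simp
  ultimately show ?thesis
    unfolding phi_scale_cc[OF assms] by (intro in_Z2_sign in_Z2_diff)
qed

lemma in_2Z2_phi_scale_cc_antisym:
  assumes "r = a + b + 1"
  shows "in_2Z2 (phi_scale r * cc r a b - phi_scale r * cc r b a)"
proof -
  have eq: "phi_scale r * cc r a b - phi_scale r * cc r b a =
      (-1) ^ r * (2 ^ (2 * r - 1) / of_nat r
        * (of_nat ((2 * r) choose (2 * b + 2)) - of_nat ((2 * r) choose (2 * a + 2))))"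
  proof -
    have r': "r = b + a + 1" and n: "2 * r - 1 = 2 * a + 2 * b + 1"
      using assms by simp_all
    show ?thesis
      unfolding phi_scale_cc[OF assms] phi_scale_cc[OF r'] odd_binomial_ratio_symmetric[OF n]
      by (simp add: algebra_simps)
  qed
  have "r \<ge> 1"
    using assms by simp
  then show ?thesis
    unfolding eq in_2Z2_sign_iff
    by (rule in_2Z2_mult_right[OF in_2Z2_pow2_div in_Z2_diff[OF in_Z2_of_nat in_Z2_of_nat]])
qed

lemma not_in_2Z2_phi_scale_cc_diagonal: "\<not> in_2Z2 (phi_scale (M + 1) * cc (M + 1) M 0)"
proof
  let ?r = "M + 1"
  define E where "E = (2 ^ (2 * ?r - 1) / of_nat ?r * of_nat ((2 * ?r) choose (2 * 0 + 2)) :: rat)"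
  have "in_2Z2 E"
    unfolding E_def by (rule in_2Z2_mult_right[OF in_2Z2_pow2_div in_Z2_of_nat]) simp
  have "(2 * ?r - 1) choose (2 * M) = 2 * M + 1"
    using binomial_Suc_n[of "2 * M"] by simp
  then have K: "(of_nat ((2 * ?r - 1) choose (2 * M)) / of_nat (2 * M + 1) :: rat) = 1"
    by (simp del: of_nat_add)
  have r: "?r = M + 0 + 1"
    by simp
  have eq: "phi_scale ?r * cc ?r M 0 = (-1) ^ ?r * (E - (2 ^ (2 * ?r) - 1))"
    unfolding phi_scale_cc[OF r] K E_def by simp
  assume "in_2Z2 (phi_scale ?r * cc ?r M 0)"
  then have "in_2Z2 (E - (E - (2 ^ (2 * ?r) - 1)))"
    unfolding eq in_2Z2_sign_iff using \<open>in_2Z2 E\<close> by (rule in_2Z2_diff[rotated])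
  moreover have "\<not> in_2Z2 (of_int (2 ^ (2 * ?r) - 1))"
    by (rule not_in_2Z2_of_int) simp
  ultimately show False
    by simp
qed

lemma in_2Z2_phi_scale_phi_word:
  assumes "r \<ge> 1" "length u = 2 * r + 1" "\<nexists>a b. u = pw a @ X0 # X0 # X1 # pw b"
  shows "in_2Z2 (phi_scale r * phi_word u)"
proof (cases "\<exists>n. u = pw n @ [X0]")
  case True
  then obtain n where u: "u = pw n @ [X0]"
    by blast
  with assms(2) have "n = r"
    by simp
  have "(2::rat) ^ (2 * r) = 2 * 2 ^ (2 * r - 1)"
    using assms(1) by (simp flip: power_Suc)
  then have eq: "phi_scale r * phi_word u = (-1) ^ r * (2 ^ (2 * r - 1) / of_nat r)"
    unfolding u phi_word_pw_X0 phi_scale_def \<open>n = r\<close> by (simp add: field_simps)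
  show ?thesis
    unfolding eq in_2Z2_sign_iff using assms(1) by (rule in_2Z2_pow2_div)
next
  case False
  with assms(3) show ?thesis
    by (simp add: phi_word_eq_0)
qed

lemma in_Z2_phi_scale_phi_word:
  assumes "r \<ge> 1" "length u = 2 * r + 1"
  shows "in_Z2 (phi_scale r * phi_word u)"
proof (cases "\<exists>a b. u = pw a @ X0 # X0 # X1 # pw b")
  case True
  then obtain a b where u: "u = pw a @ X0 # X0 # X1 # pw b"
    by blast
  with assms(2) have "r = a + b + 1"
    by simp
  then show ?thesis
    unfolding u phi_word_pw_X0X0X1_pw using in_Z2_phi_scale_cc by simp
next
  case False
  with assms show ?thesis
    using in_2Z2_imp_in_Z2 in_2Z2_phi_scale_phi_word by blast
qed

section \<open>The summands of \<open>\<partial>\<^sub>2\<^sub>r\<^sub>+\<^sub>1\<close>\<close>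

definition I_coeff :: "letter \<Rightarrow> letter \<Rightarrow> word \<Rightarrow> rat" where
  "I_coeff a b s = (if a = X1 \<and> b = X0 then 1 else if a = X0 \<and> b = X1 then (-1) ^ length s
     else if s = [] then 1 else 0)"

definition I_word :: "letter \<Rightarrow> letter \<Rightarrow> word \<Rightarrow> word" where
  "I_word a b s = (if a = X1 \<and> b = X0 then s else if a = X0 \<and> b = X1 then rev s else [])"

lemma Ifun_eq_monom: "Ifun a s b = monom (I_coeff a b s) (I_word a b s)"
  unfolding Ifun_def I_coeff_def I_word_def antipode_def by auto

definition infix_at :: "word \<Rightarrow> nat \<Rightarrow> nat \<Rightarrow> word" where
  "infix_at w r j = take (2 * r + 1) (drop j w)"

definition delete_at :: "word \<Rightarrow> nat \<Rightarrow> nat \<Rightarrow> word" where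
  "delete_at w r j = take j w @ drop (j + 2 * r + 1) w"

text \<open>The image under \<open>\<phi>\<close> of the left factor of the \<open>j\<close>-th summand of \<open>\<partial>\<^sub>2\<^sub>r\<^sub>+\<^sub>1(w)\<close>,
  whose right factor is \<open>delete_at w r j\<close>.\<close>

definition cut_coeff :: "word \<Rightarrow> nat \<Rightarrow> nat \<Rightarrow> rat" where
  "cut_coeff w r j = I_coeff (eps w j) (eps w (j + 2 * r + 2)) (infix_at w r j)
     * phi_word (I_word (eps w j) (eps w (j + 2 * r + 2)) (infix_at w r j))"

definition cuts :: "word \<Rightarrow> nat \<Rightarrow> word \<Rightarrow> nat set" where
  "cuts w r v = {j. j + 2 * r + 1 \<le> length w \<and> delete_at w r j = v}"

lemma finite_cuts: "finite (cuts w r v)"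
  by (rule finite_subset[of _ "{..length w}"]) (auto simp: cuts_def)

lemma sum_support_of_delta_sum:
  fixes f :: "'a \<Rightarrow> 'b::comm_ring_1"
  assumes "finite J"
  shows "(\<Sum>u | (\<Sum>j\<in>J. if u = U j then c j else 0) \<noteq> 0. f u * (\<Sum>j\<in>J. if u = U j then c j else 0))
    = (\<Sum>j\<in>J. f (U j) * c j)"
    (is "(\<Sum>u | ?T u \<noteq> 0. f u * ?T u) = _")
proof -
  have "(\<Sum>u | ?T u \<noteq> 0. f u * ?T u) = (\<Sum>u\<in>U ` J. f u * ?T u)"
  proof (rule sum.mono_neutral_left)
    show "{u. ?T u \<noteq> 0} \<subseteq> U ` J"
    proof
      fix u
      assume "u \<in> {u. ?T u \<noteq> 0}"
      then obtain j where "j \<in> J" "(if u = U j then c j else 0) \<noteq> 0"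
        by (auto elim: sum.not_neutral_contains_not_neutral)
      then show "u \<in> U ` J"
        by (auto split: if_splits)
    qed
  qed (use assms in auto)
  also have "\<dots> = (\<Sum>j\<in>J. \<Sum>u\<in>U ` J. if u = U j then f (U j) * c j else 0)"
    by (simp add: sum_distrib_left if_distrib sum.swap[of _ "U ` J"] cong: if_cong)
  also have "\<dots> = (\<Sum>j\<in>J. f (U j) * c j)"
    using assms by (simp add: sum.delta)
  finally show ?thesis .
qed

lemma dphi_eq_sum_cut_coeff:
  assumes "1 \<le> r" "2 * r + 1 \<le> N" "has_level (l - 1) v"
  shows "dphi N l w (r, v) = (\<Sum>j\<in>cuts w r v. cut_coeff w r j)"
proof -
  define J where "J = {j. j + 2 * r + 1 \<le> length w}"
  define K where "K j = I_coeff (eps w j) (eps w (j + 2 * r + 2)) (infix_at w r j)" for j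
  define U where "U j = I_word (eps w j) (eps w (j + 2 * r + 2)) (infix_at w r j)" for j
  define c where "c j = (if delete_at w r j = v then K j else 0)" for j
  have "finite J"
    unfolding J_def by (rule finite_subset[of _ "{..length w}"]) auto
  have "partial_l l r w (u, v) = (\<Sum>j\<in>J. if u = U j then c j else 0)" for u
    unfolding partial_l_def partial_def tensor_def J_def U_def c_def K_def
    using assms(3) by (auto simp: Ifun_eq_monom monom_def infix_at_def delete_at_def intro!: sum.cong)
  then have "dphi N l w (r, v) = (\<Sum>j\<in>J. phi_word (U j) * c j)"
    unfolding dphi_def phi_tensor_def using assms sum_support_of_delta_sum[OF \<open>finite J\<close>] by simp
  also have "\<dots> = (\<Sum>j\<in>{j\<in>J. delete_at w r j = v}. K j * phi_word (U j))"
    unfolding c_def using \<open>finite J\<close> by (auto simp: sum.inter_filter intro!: sum.cong)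
  finally show ?thesis
    unfolding cuts_def cut_coeff_def J_def K_def U_def by simp
qed

lemma length_infix_at: "j + 2 * r + 1 \<le> length w \<Longrightarrow> length (infix_at w r j) = 2 * r + 1"
  by (simp add: infix_at_def)

lemma cut_coeff_eq:
  assumes "j + 2 * r + 1 \<le> length w"
  shows "cut_coeff w r j =
    (if eps w j = X1 \<and> eps w (j + 2 * r + 2) = X0 then phi_word (infix_at w r j)
     else if eps w j = X0 \<and> eps w (j + 2 * r + 2) = X1 then - phi_word (rev (infix_at w r j))
     else 0)"
  using length_infix_at[OF assms]
  by (cases "eps w j"; cases "eps w (j + 2 * r + 2)") (auto simp: cut_coeff_def I_coeff_def I_word_def)

lemma cut_coeff_X1_X0:
  assumes "eps w j = X1" "eps w (j + 2 * r + 2) = X0" "infix_at w r j = pw a @ X0 # X0 # X1 # pw b"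
  shows "cut_coeff w r j = cc (a + b + 1) a b"
  using assms by (simp add: cut_coeff_def I_coeff_def I_word_def phi_word_pw_X0X0X1_pw)

lemma cut_coeff_X0_X1:
  assumes "eps w j = X0" "eps w (j + 2 * r + 2) = X1" "length (infix_at w r j) = 2 * r + 1"
    "rev (infix_at w r j) = pw a @ X0 # X0 # X1 # pw b"
  shows "cut_coeff w r j = - cc (a + b + 1) a b"
  using assms by (simp add: cut_coeff_def I_coeff_def I_word_def phi_word_pw_X0X0X1_pw)

lemma in_Z2_scaled_cut_coeff:
  assumes "r \<ge> 1" "j + 2 * r + 1 \<le> length w"
  shows "in_Z2 (phi_scale r * cut_coeff w r j)"
  using in_Z2_phi_scale_phi_word[OF assms(1)] length_infix_at[OF assms(2)]
  by (simp add: cut_coeff_eq[OF assms(2)] in_Z2_minus)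

lemma scaled_cut_coeff_unit_cases:
  assumes "r \<ge> 1" "j + 2 * r + 1 \<le> length w" "\<not> in_2Z2 (phi_scale r * cut_coeff w r j)"
  shows "(eps w j = X1 \<and> eps w (j + 2 * r + 2) = X0 \<and>
           (\<exists>a b. infix_at w r j = pw a @ X0 # X0 # X1 # pw b))
       \<or> (eps w j = X0 \<and> eps w (j + 2 * r + 2) = X1 \<and>
           (\<exists>a b. rev (infix_at w r j) = pw a @ X0 # X0 # X1 # pw b))"
proof -
  have unit: "\<exists>a b. u = pw a @ X0 # X0 # X1 # pw b"
    if "length u = 2 * r + 1" "\<not> in_2Z2 (phi_scale r * phi_word u)" for u
    using in_2Z2_phi_scale_phi_word[OF assms(1)] that by blast
  show ?thesis
    using assms(3) unit[of "infix_at w r j"] unit[of "rev (infix_at w r j)"]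
      length_infix_at[OF assms(2)]
    by (auto simp: cut_coeff_eq[OF assms(2)] split: if_splits)
qed

lemma drop_eq_infix_at_append:
  "j + 2 * r + 1 \<le> length w \<Longrightarrow> drop j w = infix_at w r j @ drop (j + 2 * r + 1) w"
  unfolding infix_at_def by (metis append_take_drop_id add.commute drop_drop)

lemma cut_shift_left:
  assumes w: "isolated_X1 w" and j: "1 \<le> j" "j + 2 * r + 1 \<le> length w"
    and X1: "eps w j = X1" and mid: "infix_at w r j = pw a @ X0 # X0 # X1 # pw b"
  shows "eps w (j - 1) = X0" "eps w (j - 1 + 2 * r + 2) = X1"
    "rev (infix_at w r (j - 1)) = pw b @ X0 # X0 # X1 # pw a"
    "delete_at w r (j - 1) = delete_at w r j" "j - 1 \<noteq> 0"
proof -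
  have wj: "w ! (j - 1) = X1"
    using X1 j by (simp add: eps_def)
  have "drop (j - 1) w = X1 # drop j w"
    using Cons_nth_drop_Suc[of "j - 1" w] j wj by simp
  also have "\<dots> = X1 # pw a @ X0 # X0 # X1 # pw b @ drop (j + 2 * r + 1) w"
    using drop_eq_infix_at_append[OF j(2)] mid by simp
  finally have D: "drop (j - 1) w = rev (pw b @ X0 # X0 # X1 # pw a) @ X1 # drop (j + 2 * r + 1) w"
    using X1_Cons_pw_X0X0X1_pw[of a b] by simp
  have len: "length (rev (pw b @ X0 # X0 # X1 # pw a)) = 2 * r + 1"
    using length_infix_at[OF j(2)] mid by simp
  have "infix_at w r (j - 1) = rev (pw b @ X0 # X0 # X1 # pw a)"
    unfolding infix_at_def D len[symmetric] by (metis append_eq_conv_conj)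
  then show "rev (infix_at w r (j - 1)) = pw b @ X0 # X0 # X1 # pw a"
    by simp
  have "w ! (j + 2 * r) = drop (j - 1) w ! (2 * r + 1)"
    using j by simp
  also have "\<dots> = X1"
    unfolding D len[symmetric] by (rule nth_append_length)
  finally have wl: "w ! (j + 2 * r) = X1" .
  then show "eps w (j - 1 + 2 * r + 2) = X1"
    using j by (simp add: eps_def)
  show "j - 1 \<noteq> 0"
  proof
    assume "j - 1 = 0"
    with wj j have "w ! 0 = X1" "w \<noteq> []"
      by auto
    with w show False
      using isolated_X1_first by fastforce
  qed
  then have j2: "Suc (j - 2) = j - 1"
    by simp
  have "w ! (j - 2) \<noteq> X1"
  proof
    assume "w ! (j - 2) = X1"
    with isolated_X1_next[OF w, of "j - 2"] j j2 have "w ! (j - 1) = X0"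
      by simp
    with wj show False
      by simp
  qed
  then show "eps w (j - 1) = X0"
  proof -
    have "eps w (j - 1) = w ! (j - 2)"
      using \<open>j - 1 \<noteq> 0\<close> j by (auto simp: eps_def numeral_2_eq_2)
    with \<open>w ! (j - 2) \<noteq> X1\<close> show ?thesis
      by (cases "w ! (j - 2)") auto
  qed
  have "drop (j + 2 * r) w = X1 # drop (j + 2 * r + 1) w"
    using Cons_nth_drop_Suc[of "j + 2 * r" w] j wl by simp
  moreover have "take j w = take (j - 1) w @ [X1]"
    using take_Suc_conv_app_nth[of "j - 1" w] j wj by simp
  ultimately show "delete_at w r (j - 1) = delete_at w r j"
    unfolding delete_at_def using j by simp
qed

lemma cut_shift_right:
  assumes w: "isolated_X1 w" and j: "j + 2 * r + 1 \<le> length w"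
    and X1: "eps w (j + 2 * r + 2) = X1" and mid: "rev (infix_at w r j) = pw a @ X0 # X0 # X1 # pw b"
  shows "j + 1 + 2 * r + 1 \<le> length w" "eps w (j + 1) = X1" "eps w (j + 1 + 2 * r + 2) = X0"
    "infix_at w r (j + 1) = pw b @ X0 # X0 # X1 # pw a" "delete_at w r (j + 1) = delete_at w r j"
proof -
  show j': "j + 1 + 2 * r + 1 \<le> length w"
  proof (rule ccontr)
    assume "\<not> j + 1 + 2 * r + 1 \<le> length w"
    with X1 show False
      by (simp add: eps_def)
  qed
  then have wl: "w ! (j + 2 * r + 1) = X1"
    using X1 by (simp add: eps_def)
  have dr: "drop (j + 2 * r + 1) w = X1 # drop (j + 2 * r + 2) w"
    using Cons_nth_drop_Suc[of "j + 2 * r + 1" w] j' wl by simp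
  have "drop j w = rev (pw a @ X0 # X0 # X1 # pw b) @ X1 # drop (j + 2 * r + 2) w"
    using drop_eq_infix_at_append[OF j] mid dr by (metis rev_rev_ident)
  then have D: "drop j w = X1 # (pw b @ X0 # X0 # X1 # pw a) @ drop (j + 2 * r + 2) w"
    using X1_Cons_pw_X0X0X1_pw[of b a] by simp
  have len: "length (pw b @ X0 # X0 # X1 # pw a) = 2 * r + 1"
    using arg_cong[OF mid, of length] length_infix_at[OF j] by simp
  have "drop (j + 1) w = (pw b @ X0 # X0 # X1 # pw a) @ drop (j + 2 * r + 2) w"
    using arg_cong[OF D, of tl] by (simp add: drop_Suc tl_drop)
  then show "infix_at w r (j + 1) = pw b @ X0 # X0 # X1 # pw a"
    unfolding infix_at_def len[symmetric] by (metis append_eq_conv_conj)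
  have wj: "w ! j = X1"
    using arg_cong[OF D, of hd] j by (simp add: hd_drop_conv_nth)
  then show "eps w (j + 1) = X1"
    using j by (simp add: eps_def)
  show "eps w (j + 1 + 2 * r + 2) = X0"
    using isolated_X1_next[OF w, of "j + 2 * r + 1"] wl by (auto simp: eps_def)
  have "take (j + 1) w = take j w @ [X1]"
    using take_Suc_conv_app_nth[of j w] j wj by simp
  then show "delete_at w r (j + 1) = delete_at w r j"
    unfolding delete_at_def using dr by simp
qed

text \<open>A summand at \<open>j \<ge> 1\<close> whose rescaled \<open>\<phi>\<close>-value is a unit is matched with the summand at
  \<open>j - 1\<close>: same right factor, reversed middle, and the two values cancel modulo 2.\<close>

definition left_cuts :: "word \<Rightarrow> nat \<Rightarrow> word \<Rightarrow> nat set" where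
  "left_cuts w r v = {j \<in> cuts w r v. j \<noteq> 0 \<and> eps w j = X1 \<and> eps w (j + 2 * r + 2) = X0 \<and>
     (\<exists>a b. infix_at w r j = pw a @ X0 # X0 # X1 # pw b)}"

definition right_cuts :: "word \<Rightarrow> nat \<Rightarrow> word \<Rightarrow> nat set" where
  "right_cuts w r v = {j \<in> cuts w r v. eps w j = X0 \<and> eps w (j + 2 * r + 2) = X1 \<and>
     (\<exists>a b. rev (infix_at w r j) = pw a @ X0 # X0 # X1 # pw b)}"

lemma bij_betw_left_right_cuts:
  assumes "isolated_X1 w"
  shows "bij_betw (\<lambda>j. j - 1) (left_cuts w r v) (right_cuts w r v)"
proof (rule bij_betw_byWitness[where f' = "\<lambda>j. j + 1"])
  show "(\<lambda>j. j - 1) ` left_cuts w r v \<subseteq> right_cuts w r v"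
  proof clarify
    fix j
    assume "j \<in> left_cuts w r v"
    then obtain a b where "j \<noteq> 0" "j + 2 * r + 1 \<le> length w" "delete_at w r j = v"
      "eps w j = X1" "infix_at w r j = pw a @ X0 # X0 # X1 # pw b"
      unfolding left_cuts_def cuts_def by blast
    with cut_shift_left[OF assms, of j r a b] show "j - 1 \<in> right_cuts w r v"
      unfolding right_cuts_def cuts_def by auto
  qed
  show "(\<lambda>j. j + 1) ` right_cuts w r v \<subseteq> left_cuts w r v"
  proof clarify
    fix j
    assume "j \<in> right_cuts w r v"
    then obtain a b where "j + 2 * r + 1 \<le> length w" "delete_at w r j = v"
      "eps w (j + 2 * r + 2) = X1" "rev (infix_at w r j) = pw a @ X0 # X0 # X1 # pw b"
      unfolding right_cuts_def cuts_def by blast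
    with cut_shift_right[OF assms, of j r a b] show "j + 1 \<in> left_cuts w r v"
      unfolding left_cuts_def cuts_def by auto
  qed
qed (auto simp: left_cuts_def)

lemma in_2Z2_scaled_cut_coeff_pair:
  assumes "isolated_X1 w" "j \<in> left_cuts w r v"
  shows "in_2Z2 (phi_scale r * cut_coeff w r j + phi_scale r * cut_coeff w r (j - 1))"
proof -
  obtain a b where j: "j \<noteq> 0" "j + 2 * r + 1 \<le> length w" "eps w j = X1" "eps w (j + 2 * r + 2) = X0"
    and mid: "infix_at w r j = pw a @ X0 # X0 # X1 # pw b"
    using assms(2) unfolding left_cuts_def cuts_def by blast
  have r: "r = a + b + 1"
    using length_infix_at[OF j(2)] mid by simp
  have "1 \<le> j"
    using j(1) by simp
  note shift = cut_shift_left[OF assms(1) this j(2) j(3) mid]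
  have "length (infix_at w r (j - 1)) = 2 * r + 1"
    using arg_cong[OF shift(3), of length] r by simp
  then have "cut_coeff w r (j - 1) = - cc (b + a + 1) b a"
    using cut_coeff_X0_X1[OF shift(1) shift(2)] shift(3) j(1) by simp
  moreover have "cut_coeff w r j = cc (a + b + 1) a b"
    by (rule cut_coeff_X1_X0[OF j(3) j(4) mid])
  ultimately show ?thesis
    using in_2Z2_phi_scale_cc_antisym[OF r] r by (simp add: add.commute)
qed

lemma in_2Z2_scaled_cut_coeff_sum_pos:
  assumes "isolated_X1 w" "r \<ge> 1"
  shows "in_2Z2 (\<Sum>j\<in>cuts w r v - {0}. phi_scale r * cut_coeff w r j)"
proof -
  let ?t = "\<lambda>j. phi_scale r * cut_coeff w r j"
  let ?L = "left_cuts w r v" and ?R = "right_cuts w r v"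
  define E where "E = cuts w r v - {0} - ?L - ?R"
  have sub: "?L \<subseteq> cuts w r v - {0}" "?R \<subseteq> cuts w r v - {0}"
    unfolding left_cuts_def right_cuts_def by (auto simp: eps_def)
  have fin: "finite ?L" "finite ?R" "finite E"
    using finite_cuts sub unfolding E_def by (auto intro: finite_subset)
  have disj: "?L \<inter> ?R = {}"
    unfolding left_cuts_def right_cuts_def by auto
  have disjE: "(?L \<union> ?R) \<inter> E = {}"
    unfolding E_def by blast
  have "cuts w r v - {0} = ?L \<union> ?R \<union> E"
    unfolding E_def using sub by blast
  then have "(\<Sum>j\<in>cuts w r v - {0}. ?t j) = sum ?t ?L + sum ?t ?R + sum ?t E"
    by (simp only: sum.union_disjoint[OF _ fin(3) disjE] sum.union_disjoint[OF fin(1,2) disj]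
        finite_UnI fin)
  also have "sum ?t ?R = (\<Sum>j\<in>?L. ?t (j - 1))"
    using sum.reindex_bij_betw[OF bij_betw_left_right_cuts[OF assms(1)], of ?t] by simp
  finally have "(\<Sum>j\<in>cuts w r v - {0}. ?t j) = (\<Sum>j\<in>?L. ?t j + ?t (j - 1)) + sum ?t E"
    by (simp add: sum.distrib)
  moreover have "in_2Z2 (\<Sum>j\<in>?L. ?t j + ?t (j - 1))"
    using in_2Z2_scaled_cut_coeff_pair[OF assms(1)] by (rule in_2Z2_sum)
  moreover have "in_2Z2 (sum ?t E)"
  proof (rule in_2Z2_sum)
    fix j
    assume "j \<in> E"
    then have "j + 2 * r + 1 \<le> length w" "j \<noteq> 0" "j \<notin> ?L" "j \<notin> ?R" "j \<in> cuts w r v"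
      unfolding E_def cuts_def by auto
    then show "in_2Z2 (?t j)"
      using scaled_cut_coeff_unit_cases[OF assms(2)] unfolding left_cuts_def right_cuts_def by blast
  qed
  ultimately show ?thesis
    by (simp add: in_2Z2_add)
qed

lemma scaled_cut_coeff_0_unit:
  assumes "r \<ge> 1" "2 * r + 1 \<le> length w" "\<not> in_2Z2 (phi_scale r * cut_coeff w r 0)"
  obtains a b where "a + b + 1 = r" "w = pw a @ X0 # X0 # X1 # pw b @ drop (2 * r + 1) w"
proof -
  have "eps w 0 = X1"
    by (simp add: eps_def)
  then obtain a b where mid: "infix_at w r 0 = pw a @ X0 # X0 # X1 # pw b"
    using scaled_cut_coeff_unit_cases[of r 0 w] assms by auto
  then have "a + b + 1 = r"
    using length_infix_at[of 0 r w] assms(2) by simp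
  moreover have "w = pw a @ X0 # X0 # X1 # pw b @ drop (2 * r + 1) w"
    using drop_eq_infix_at_append[of 0 r w] assms(2) mid by simp
  ultimately show ?thesis
    using that by blast
qed

lemma not_in_2Z2_scaled_cut_coeff_0:
  assumes "isolated_X1 v"
  shows "\<not> in_2Z2 (phi_scale (M + 1) * cut_coeff (pw M @ X0 # X0 # X1 # v) (M + 1) 0)"
proof -
  let ?w = "pw M @ X0 # X0 # X1 # v"
  have "eps ?w (0 + 2 * (M + 1) + 2) = X0"
  proof (cases v)
    case (Cons x v')
    then have "x = X0"
      using isolated_X1_first[OF assms] by auto
    with Cons show ?thesis
      by (simp add: eps_def nth_append)
  qed (simp add: eps_def)
  moreover have "infix_at ?w (M + 1) 0 = pw M @ X0 # X0 # X1 # pw 0"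
    by (simp add: infix_at_def)
  ultimately have "cut_coeff ?w (M + 1) 0 = cc (M + 1) M 0"
    using cut_coeff_X1_X0[of ?w 0 "M + 1" M 0] by (simp add: eps_def)
  then show ?thesis
    using not_in_2Z2_phi_scale_cc_diagonal by simp
qed


section \<open>Linear algebra over \<open>\<rat>\<close>\<close>

lemma kernel_trivial_if_unitriangular_mod2:
  fixes G :: "'a \<Rightarrow> 'b \<Rightarrow> rat" and col :: "'a \<Rightarrow> 'b" and h :: "'a \<Rightarrow> nat"
  assumes "finite A"
    and integral: "\<And>x x'. x \<in> A \<Longrightarrow> x' \<in> A \<Longrightarrow> in_Z2 (G x' (col x))"
    and diagonal: "\<And>x. x \<in> A \<Longrightarrow> \<not> in_2Z2 (G x (col x))"
    and off_diagonal: "\<And>x x'. x \<in> A \<Longrightarrow> x' \<in> A \<Longrightarrow> x' \<noteq> x \<Longrightarrow> h x \<le> h x' \<Longrightarrow> in_2Z2 (G x' (col x))"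
    and support: "\<forall>x. f x \<noteq> 0 \<longrightarrow> x \<in> A"
    and kernel: "\<forall>y. (\<Sum>x\<in>A. f x * G x y) = 0"
  shows "f x = 0"
proof (rule ccontr)
  assume "f x \<noteq> 0"
  with support obtain c where c: "\<And>x'. x' \<in> A \<Longrightarrow> in_Z2 (c * f x')" "\<exists>x'\<in>A. \<not> in_2Z2 (c * f x')"
    using exists_scaling_to_unit[OF \<open>finite A\<close>, of x f] by metis
  then obtain x0 where x0: "x0 \<in> A" "\<not> in_2Z2 (c * f x0)"
    and least: "\<And>x'. x' \<in> A \<Longrightarrow> \<not> in_2Z2 (c * f x') \<Longrightarrow> h x0 \<le> h x'"
    using ex_has_least_nat[of "\<lambda>x'. x' \<in> A \<and> \<not> in_2Z2 (c * f x')" _ h] by metis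
  have rest: "in_2Z2 (c * f x' * G x' (col x0))" if "x' \<in> A - {x0}" for x'
  proof (cases "in_2Z2 (c * f x')")
    case True
    then show ?thesis
      using integral[OF x0(1)] that by (simp add: in_2Z2_mult_right)
  next
    case False
    then show ?thesis
      using that c(1) off_diagonal[OF x0(1)] least by (auto intro: in_2Z2_mult_left)
  qed
  have "\<not> in_2Z2 (\<Sum>x'\<in>A. c * f x' * G x' (col x0))"
    unfolding sum.remove[OF \<open>finite A\<close> x0(1)]
    using not_in_2Z2_mult[OF c(1)[OF x0(1)] x0(2) integral[OF x0(1) x0(1)] diagonal[OF x0(1)]]
      in_2Z2_sum[OF rest] by (rule not_in_2Z2_add)
  moreover have "(\<Sum>x'\<in>A. c * f x' * G x' (col x0)) = 0"
    using kernel by (simp add: mult.assoc flip: sum_distrib_left)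
  ultimately show False
    by simp
qed

interpretation rat_fun: vector_space "\<lambda>(c::rat) (g::'a \<Rightarrow> rat) y. c * g y"
  by unfold_locales (simp_all add: fun_eq_iff algebra_simps)

lemma sum_fun_apply: "(sum f A) x = (\<Sum>a\<in>A. f a x)"
  by (induction A rule: infinite_finite_induct) simp_all


lemma inj_on_matrix_rows:
  fixes G :: "'a \<Rightarrow> 'b \<Rightarrow> rat"
  assumes finA: "finite A"
    and kernel: "\<forall>f. (\<forall>x. f x \<noteq> 0 \<longrightarrow> x \<in> A) \<longrightarrow> (\<forall>y. (\<Sum>x\<in>A. f x * G x y) = 0) \<longrightarrow> (\<forall>x. f x = 0)"
  shows "inj_on G A"
proof (rule inj_onI, rule ccontr)
  fix x1 x2
  assume x: "x1 \<in> A" "x2 \<in> A" "G x1 = G x2" "x1 \<noteq> x2"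
  define f where "f x = (if x = x1 then 1 else if x = x2 then -1 else (0::rat))" for x
  have "\<forall>y. (\<Sum>x\<in>A. f x * G x y) = 0"
  proof
    fix y
    have "(\<Sum>x\<in>A. f x * G x y) = (\<Sum>x\<in>{x1, x2}. f x * G x y)"
      by (rule sum.mono_neutral_right) (use finA x in \<open>auto simp: f_def\<close>)
    then show "(\<Sum>x\<in>A. f x * G x y) = 0"
      using x by (simp add: f_def)
  qed
  moreover have "\<forall>x. f x \<noteq> 0 \<longrightarrow> x \<in> A"
    using x unfolding f_def by auto
  ultimately have "f x1 = 0"
    using kernel by blast
  then show False
    by (simp add: f_def)
qed

lemma independent_matrix_rows:
  fixes G :: "'a \<Rightarrow> 'b \<Rightarrow> rat"
  assumes finA: "finite A"
    and kernel: "\<forall>f. (\<forall>x. f x \<noteq> 0 \<longrightarrow> x \<in> A) \<longrightarrow> (\<forall>y. (\<Sum>x\<in>A. f x * G x y) = 0) \<longrightarrow> (\<forall>x. f x = 0)"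
  shows "rat_fun.independent (G ` A)"
proof
  assume "rat_fun.dependent (G ` A)"
  then obtain t u where t: "finite t" "t \<subseteq> G ` A" "(\<Sum>v\<in>t. (\<lambda>y. u v * v y)) = 0"
    and "\<exists>v\<in>t. u v \<noteq> 0"
    unfolding rat_fun.dependent_explicit by blast
  then obtain x0 where x0: "x0 \<in> A" "G x0 \<in> t" "u (G x0) \<noteq> 0"
    by blast
  define f where "f x = (if x \<in> A \<and> G x \<in> t then u (G x) else 0)" for x
  have "\<forall>y. (\<Sum>x\<in>A. f x * G x y) = 0"
  proof
    fix y
    have "(\<Sum>x\<in>A. f x * G x y) = (\<Sum>x\<in>{x \<in> A. G x \<in> t}. u (G x) * G x y)"
      unfolding f_def using finA by (simp add: sum.inter_filter if_distrib if_distribR cong: if_cong)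
    also have "\<dots> = (\<Sum>v\<in>G ` {x \<in> A. G x \<in> t}. u v * v y)"
      using inj_on_subset[OF inj_on_matrix_rows[OF finA kernel]] by (simp add: sum.reindex)
    also have "G ` {x \<in> A. G x \<in> t} = t"
      using t(2) by auto
    finally show "(\<Sum>x\<in>A. f x * G x y) = 0"
      using fun_cong[OF t(3), of y] by (simp add: sum_fun_apply)
  qed
  moreover have "\<forall>x. f x \<noteq> 0 \<longrightarrow> x \<in> A"
    unfolding f_def by auto
  ultimately have "f x0 = 0"
    using kernel by blast
  with x0 show False
    by (simp add: f_def)
qed

lemma finitely_supported_in_span:
  assumes "finite B" "\<forall>y. g y \<noteq> 0 \<longrightarrow> y \<in> B"
  shows "g \<in> rat_fun.span ((\<lambda>y z. if z = y then 1 else 0 :: rat) ` B)"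
proof -
  have "g = (\<Sum>y\<in>B. (\<lambda>z. g y * (if z = y then 1 else 0)))"
  proof
    fix z
    show "g z = (\<Sum>y\<in>B. (\<lambda>z. g y * (if z = y then 1 else 0))) z"
      using assms by (auto simp: sum_fun_apply if_distrib sum.delta cong: if_cong)
  qed
  also have "\<dots> \<in> rat_fun.span ((\<lambda>y z. if z = y then 1 else 0 :: rat) ` B)"
    by (intro rat_fun.span_sum rat_fun.span_scale rat_fun.span_base) auto
  finally show ?thesis .
qed

lemma bij_betw_matrix_map:
  fixes G :: "'a \<Rightarrow> 'b \<Rightarrow> rat"
  assumes finA: "finite A" and finB: "finite B" and card: "card A = card B"
    and support: "\<And>x y. x \<in> A \<Longrightarrow> G x y \<noteq> 0 \<Longrightarrow> y \<in> B"
    and kernel: "\<forall>f. (\<forall>x. f x \<noteq> 0 \<longrightarrow> x \<in> A) \<longrightarrow> (\<forall>y. (\<Sum>x\<in>A. f x * G x y) = 0) \<longrightarrow> (\<forall>x. f x = 0)"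
  shows "bij_betw (\<lambda>f y. \<Sum>x\<in>A. f x * G x y) {f. \<forall>x. f x \<noteq> 0 \<longrightarrow> x \<in> A} {g. \<forall>y. g y \<noteq> 0 \<longrightarrow> y \<in> B}"
proof -
  let ?F = "\<lambda>f y. \<Sum>x\<in>A. f x * G x y"
  let ?Dom = "{f :: 'a \<Rightarrow> rat. \<forall>x. f x \<noteq> 0 \<longrightarrow> x \<in> A}"
    and ?Cod = "{g :: 'b \<Rightarrow> rat. \<forall>y. g y \<noteq> 0 \<longrightarrow> y \<in> B}"
  have "?F ` ?Dom \<subseteq> ?Cod"
    using support by (fastforce elim: sum.not_neutral_contains_not_neutral)
  moreover have "inj_on ?F ?Dom"
  proof (rule inj_onI)
    fix f1 f2
    assume f: "f1 \<in> ?Dom" "f2 \<in> ?Dom" "?F f1 = ?F f2"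
    define h where "h x = f1 x - f2 x" for x
    have "\<forall>x. h x \<noteq> 0 \<longrightarrow> x \<in> A"
    proof (intro allI impI)
      fix x
      assume "h x \<noteq> 0"
      then have "f1 x \<noteq> 0 \<or> f2 x \<noteq> 0"
        unfolding h_def by auto
      with f(1,2) show "x \<in> A"
        by auto
    qed
    moreover have "\<forall>y. (\<Sum>x\<in>A. h x * G x y) = 0"
      using f(3) unfolding h_def by (simp add: fun_eq_iff sum_subtractf left_diff_distrib)
    ultimately have "\<forall>x. h x = 0"
      using kernel by blast
    then show "f1 = f2"
      by (simp add: h_def fun_eq_iff)
  qed
  moreover have "?Cod \<subseteq> ?F ` ?Dom"
  proof
    fix g
    assume g: "g \<in> ?Cod"
    let ?E = "G ` A"
    have indE: "rat_fun.independent ?E"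
      using finA kernel by (rule independent_matrix_rows)
    have cardE: "card ?E = card B"
      using card card_image[OF inj_on_matrix_rows[OF finA kernel]] by simp
    have span: "insert g ?E \<subseteq> rat_fun.span ((\<lambda>y z. if z = y then 1 else 0 :: rat) ` B)"
      using g support finB by (auto intro!: finitely_supported_in_span)
    have "g \<in> rat_fun.span ?E"
    proof (rule ccontr)
      assume "g \<notin> rat_fun.span ?E"
      then have "rat_fun.independent (insert g ?E)" and "g \<notin> ?E"
        using rat_fun.independent_insertI[OF _ indE] rat_fun.span_base by blast+
      then have "card (insert g ?E) \<le> card ((\<lambda>y z. if z = y then 1 else 0 :: rat) ` B)"
        using rat_fun.independent_span_bound[OF _ _ span] finB by auto
      also have "\<dots> \<le> card B"
        using finB by (rule card_image_le)
      finally show False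
        using \<open>g \<notin> ?E\<close> cardE finA by simp
    qed
    then obtain u where u: "g = (\<Sum>v\<in>?E. (\<lambda>y. u v * v y))"
      unfolding rat_fun.span_finite[OF finite_imageI[OF finA]] by blast
    define f where "f x = (if x \<in> A then u (G x) else 0)" for x
    have "?F f = g"
    proof
      fix y
      have "?F f y = (\<Sum>x\<in>A. u (G x) * G x y)"
        unfolding f_def by (rule sum.cong) auto
      also have "\<dots> = (\<Sum>v\<in>?E. u v * v y)"
        using inj_on_matrix_rows[OF finA kernel] by (simp add: sum.reindex)
      finally show "?F f y = g y"
        unfolding u by (simp add: sum_fun_apply)
    qed
    moreover have "f \<in> ?Dom"
      unfolding f_def by auto
    ultimately show "g \<in> ?F ` ?Dom"
      by blast
  qed
  ultimately show ?thesis
    unfolding bij_betw_def by blast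
qed


section \<open>The matrix of \<open>\<partial>\<^sup>\<phi>\<^sub><\<^sub>N\<close>\<close>

lemma finite_grB: "finite (grB N l)"
proof -
  have "grB N l \<subseteq> {xs. set xs \<subseteq> {X0, X1} \<and> length xs = N}"
    unfolding grB_def using letter.exhaust by blast
  then show ?thesis
    by (rule finite_subset) (simp add: finite_lists_length_eq)
qed

definition col_index :: "word \<Rightarrow> nat \<times> word" where
  "col_index w = (lead_pairs w + 1, drop (2 * lead_pairs w + 3) w)"

definition cod_index :: "nat \<Rightarrow> nat \<Rightarrow> (nat \<times> word) set" where
  "cod_index N l = {(r, v). 1 \<le> r \<and> 2 * r + 1 \<le> N \<and> v \<in> grB (N - (2 * r + 1)) (l - 1)}"

lemma grB_pos_cases:
  assumes "l \<ge> 1" "w \<in> grB N l"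
  obtains M v where "w = pw M @ X0 # X0 # X1 # v" "has_level (l - 1) v"
    "col_index w = (M + 1, v)" "N = 2 * M + 3 + length v"
  using assms has_level_pos_iff[OF assms(1)] unfolding grB_def col_index_def by auto

lemma bij_betw_col_index:
  assumes "l \<ge> 1"
  shows "bij_betw col_index (grB N l) (cod_index N l)"
proof (rule bij_betw_byWitness[where f' = "\<lambda>(r, v). pw (r - 1) @ X0 # X0 # X1 # v"])
  show "\<forall>w\<in>grB N l. (\<lambda>(r, v). pw (r - 1) @ X0 # X0 # X1 # v) (col_index w) = w"
  proof
    fix w
    assume "w \<in> grB N l"
    then obtain M v where "w = pw M @ X0 # X0 # X1 # v" "col_index w = (M + 1, v)"
      using grB_pos_cases[OF assms] by metis
    then show "(\<lambda>(r, v). pw (r - 1) @ X0 # X0 # X1 # v) (col_index w) = w"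
      by simp
  qed
  show "\<forall>y\<in>cod_index N l. col_index ((\<lambda>(r, v). pw (r - 1) @ X0 # X0 # X1 # v) y) = y"
    by (auto simp: cod_index_def col_index_def)
  show "col_index ` grB N l \<subseteq> cod_index N l"
  proof
    fix y
    assume "y \<in> col_index ` grB N l"
    then obtain w where "w \<in> grB N l" "y = col_index w"
      by blast
    moreover obtain M v where "has_level (l - 1) v" "col_index w = (M + 1, v)"
      "N = 2 * M + 3 + length v"
      using grB_pos_cases[OF assms \<open>w \<in> grB N l\<close>] by metis
    ultimately show "y \<in> cod_index N l"
      unfolding cod_index_def grB_def by simp
  qed
  show "(\<lambda>(r, v). pw (r - 1) @ X0 # X0 # X1 # v) ` cod_index N l \<subseteq> grB N l"
  proof clarify
    fix r v
    assume "(r, v) \<in> cod_index N l"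
    then have "1 \<le> r" "2 * r + 1 \<le> N" "length v = N - (2 * r + 1)" "has_level (l - 1) v"
      unfolding cod_index_def grB_def by auto
    then show "pw (r - 1) @ X0 # X0 # X1 # v \<in> grB N l"
      unfolding grB_def using has_level_pos_iff[OF assms] by auto
  qed
qed

lemma dphi_support:
  assumes "dphi N l w y \<noteq> 0" "length w = N"
  shows "y \<in> cod_index N l"
proof -
  obtain r v where y: "y = (r, v)"
    by fastforce
  with assms(1) have r: "1 \<le> r" "2 * r + 1 \<le> N" and "phi_tensor (partial_l l r w) v \<noteq> 0"
    unfolding dphi_def by (auto split: if_splits)
  then obtain u where "partial_l l r w (u, v) \<noteq> 0"
    unfolding phi_tensor_def by (auto elim: sum.not_neutral_contains_not_neutral)
  then have "has_level (l - 1) v" and "partial r w (u, v) \<noteq> 0"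
    unfolding partial_l_def by (auto split: if_splits)
  then obtain j where "j + 2 * r + 1 \<le> length w" "v = take j w @ drop (j + 2 * r + 1) w"
    unfolding partial_def tensor_def monom_def
    by (auto elim: sum.not_neutral_contains_not_neutral split: if_splits)
  with assms(2) r \<open>has_level (l - 1) v\<close> show ?thesis
    unfolding y cod_index_def grB_def by simp
qed

lemma scaled_dphi_split:
  assumes "1 \<le> r" "2 * r + 1 \<le> N" "has_level (l - 1) v"
  shows "phi_scale r * dphi N l w (r, v) =
    (\<Sum>j\<in>cuts w r v \<inter> {0}. phi_scale r * cut_coeff w r j)
      + (\<Sum>j\<in>cuts w r v - {0}. phi_scale r * cut_coeff w r j)"
  unfolding dphi_eq_sum_cut_coeff[OF assms] sum_distrib_left
  by (rule sum.Int_Diff[OF finite_cuts])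

lemma in_Z2_scaled_dphi:
  assumes "1 \<le> r" "2 * r + 1 \<le> N" "has_level (l - 1) v"
  shows "in_Z2 (phi_scale r * dphi N l w (r, v))"
  unfolding dphi_eq_sum_cut_coeff[OF assms] sum_distrib_left
  using in_Z2_scaled_cut_coeff[OF assms(1)] by (auto intro: in_Z2_sum simp: cuts_def)

lemma not_in_2Z2_scaled_dphi_diagonal:
  assumes "has_level (l - 1) v" "N = 2 * M + 3 + length v"
  shows "\<not> in_2Z2 (phi_scale (M + 1) * dphi N l (pw M @ X0 # X0 # X1 # v) (M + 1, v))"
proof -
  let ?w = "pw M @ X0 # X0 # X1 # v"
  have "has_level (Suc (l - 1)) ?w"
    using has_level_pos_iff[of "Suc (l - 1)"] assms(1) by auto
  then have "in_2Z2 (\<Sum>j\<in>cuts ?w (M + 1) v - {0}. phi_scale (M + 1) * cut_coeff ?w (M + 1) j)"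
    by (intro in_2Z2_scaled_cut_coeff_sum_pos has_level_isolated_X1) simp_all
  moreover have "\<not> in_2Z2 (phi_scale (M + 1) * cut_coeff ?w (M + 1) 0)"
    using has_level_isolated_X1[OF assms(1)] by (rule not_in_2Z2_scaled_cut_coeff_0)
  moreover have "cuts ?w (M + 1) v \<inter> {0} = {0}"
    by (auto simp: cuts_def delete_at_def)
  ultimately show ?thesis
    using scaled_dphi_split[of "M + 1" N l v ?w] assms by (simp add: not_in_2Z2_add)
qed

lemma in_2Z2_scaled_dphi_off_diagonal:
  assumes "has_level (l - 1) v" "2 * (M + 1) + 1 \<le> N" "isolated_X1 w" "M \<le> lead_pairs w"
    and "w \<noteq> pw M @ X0 # X0 # X1 # v"
  shows "in_2Z2 (phi_scale (M + 1) * dphi N l w (M + 1, v))"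
proof -
  let ?r = "M + 1"
  have "in_2Z2 (phi_scale ?r * cut_coeff w ?r 0)" if "0 \<in> cuts w ?r v"
  proof (rule ccontr)
    assume "\<not> in_2Z2 (phi_scale ?r * cut_coeff w ?r 0)"
    moreover have "2 * ?r + 1 \<le> length w" "drop (2 * ?r + 1) w = v"
      using that by (simp_all add: cuts_def delete_at_def)
    ultimately obtain a b where "a + b + 1 = ?r" "w = pw a @ X0 # X0 # X1 # pw b @ v"
      using scaled_cut_coeff_0_unit[of ?r w] by (metis le_add2)
    with assms(4,5) show False
      by auto
  qed
  then have "in_2Z2 (\<Sum>j\<in>cuts w ?r v \<inter> {0}. phi_scale ?r * cut_coeff w ?r j)"
    by (auto intro: in_2Z2_sum)
  moreover have "in_2Z2 (\<Sum>j\<in>cuts w ?r v - {0}. phi_scale ?r * cut_coeff w ?r j)"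
    using assms(3) by (rule in_2Z2_scaled_cut_coeff_sum_pos) simp
  ultimately show ?thesis
    unfolding scaled_dphi_split[OF le_add2 assms(2) assms(1)] by (rule in_2Z2_add)
qed

lemma dphi_kernel_trivial:
  assumes "l \<ge> 1"
  shows "\<forall>f. (\<forall>w. f w \<noteq> 0 \<longrightarrow> w \<in> grB N l) \<longrightarrow> (\<forall>y. (\<Sum>w\<in>grB N l. f w * dphi N l w y) = 0)
    \<longrightarrow> (\<forall>w. f w = 0)"
proof (intro allI impI)
  fix f :: "word \<Rightarrow> rat" and w
  assume support: "\<forall>w. f w \<noteq> 0 \<longrightarrow> w \<in> grB N l"
    and kernel: "\<forall>y. (\<Sum>w\<in>grB N l. f w * dphi N l w y) = 0"
  define G where "G w y = phi_scale (fst y) * dphi N l w y" for w y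
  have integral: "in_Z2 (G x' (col_index x))" if x: "x \<in> grB N l" for x x'
  proof -
    obtain M v where "has_level (l - 1) v" "col_index x = (M + 1, v)" "N = 2 * M + 3 + length v"
      using grB_pos_cases[OF assms x] by metis
    then show ?thesis
      using in_Z2_scaled_dphi[of "M + 1" N l v x'] unfolding G_def by simp
  qed
  have diagonal: "\<not> in_2Z2 (G x (col_index x))" if x: "x \<in> grB N l" for x
  proof -
    obtain M v where "x = pw M @ X0 # X0 # X1 # v" "has_level (l - 1) v"
      "col_index x = (M + 1, v)" "N = 2 * M + 3 + length v"
      using grB_pos_cases[OF assms x] .
    then show ?thesis
      using not_in_2Z2_scaled_dphi_diagonal[of l v N M] unfolding G_def by simp
  qed
  have off_diagonal: "in_2Z2 (G x' (col_index x))"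
    if x: "x \<in> grB N l" "x' \<in> grB N l" "x' \<noteq> x" "lead_pairs x \<le> lead_pairs x'" for x x'
  proof -
    obtain M v where "x = pw M @ X0 # X0 # X1 # v" "has_level (l - 1) v"
      "col_index x = (M + 1, v)" "N = 2 * M + 3 + length v"
      using grB_pos_cases[OF assms x(1)] .
    moreover have "isolated_X1 x'"
      using x(2) has_level_isolated_X1 by (auto simp: grB_def)
    ultimately show ?thesis
      using in_2Z2_scaled_dphi_off_diagonal[of l v M N x'] x(3,4) unfolding G_def by simp
  qed
  have "\<forall>y. (\<Sum>x\<in>grB N l. f x * G x y) = 0"
    using kernel unfolding G_def by (simp add: mult.left_commute flip: sum_distrib_left)
  with finite_grB integral diagonal off_diagonal support show "f w = 0"
    by (rule kernel_trivial_if_unitriangular_mod2)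
qed

theorem mainTheorem17:
  fixes N l :: nat
  assumes "N \<ge> 1" and "l \<ge> 1"
  shows "bij_betw (Phi N l) (GrDom N l) (GrCod N l)"
proof -
  have bij: "bij_betw col_index (grB N l) (cod_index N l)"
    using bij_betw_col_index[OF assms(2)] .
  have "bij_betw (\<lambda>f y. \<Sum>w\<in>grB N l. f w * dphi N l w y)
      {f. \<forall>w. f w \<noteq> 0 \<longrightarrow> w \<in> grB N l} {g. \<forall>y. g y \<noteq> 0 \<longrightarrow> y \<in> cod_index N l}"
  proof (rule bij_betw_matrix_map[OF finite_grB _ _ _ dphi_kernel_trivial[OF assms(2)]])
    show "finite (cod_index N l)"
      using bij_betw_finite[OF bij] finite_grB by blast
    show "card (grB N l) = card (cod_index N l)"
      using bij by (rule bij_betw_same_card)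
    show "y \<in> cod_index N l" if "w \<in> grB N l" "dphi N l w y \<noteq> 0" for w y
      using dphi_support that by (simp add: grB_def)
  qed
  then show ?thesis
    unfolding Phi_def GrDom_def GrCod_def cod_index_def by (simp add: case_prod_beta)
qed

end
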